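(* Let $M,N,d$ be positive integers with $d>MN$. For $i=1,\dots,M$ let $X_i\in\mathbb{R}^{N\times d}$ and $y_i\in\mathbb{R}^N$, and suppose the stacked matrix $X_c=[X_1^T,\dots,X_M^T]^T\in\mathbb{R}^{MN\times d}$ has full row rank $MN$; let $y_c=[y_1^T,\dots,y_M^T]^T$. Consider Local-GD for linear regression with $w_0^0=0$: for $k=0,1,2,\dots$ each node $i$ runs gradient descent $w\mapsto w-\eta\nabla f_i(w)$ on $f_i(w)=\frac{1}{2N}\|y_i-X_iw\|^2$ initialized at $w_0^k$, with a constant step size small enough for convergence, until convergence, and sets $w_i^{k+1}$ to be the limit; then $w_0^{k+1}=\frac1M\sum_{i=1}^M w_i^{k+1}$. Let $w_c=X_c^T(X_cX_c^T)^{-1}y_c$ be the centralized model (the minimum-Euclidean-norm solution of $X_cw=y_c$, equivalently the limit of gradient descent from $0$ on the total squared loss). Then $w_0^K\to w_c$ as $K\to\infty$.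
   Context: Distributed setting with $M$ compute nodes; node $i$ holds data matrix $X_i$ (rows are samples) and labels $y_i$. Each local problem is solved to convergence in every communication round. *)

theory Defs
  imports "HOL-Analysis.Analysis"
begin

text \<open>Nodes are indexed by a finite type 'm (M = CARD('m)), rows of each local
data matrix by a finite type 'n (N = CARD('n)), features by 'd (d = CARD('d)).\<close>

definition local_loss :: "real^'d^'n \<Rightarrow> real^'n \<Rightarrow> real^'d \<Rightarrow> real" where
  "local_loss X y w = (1 / (2 * real CARD('n))) * (norm (y - X *v w))\<^sup>2"

definition local_grad :: "real^'d^'n \<Rightarrow> real^'n \<Rightarrow> real^'d \<Rightarrow> real^'d" where
  "local_grad X y w = (1 / real CARD('n)) *\<^sub>R (transpose X *v (X *v w - y))"

definition gd_iter :: "real^'d^'n \<Rightarrow> real^'n \<Rightarrow> real \<Rightarrow> real^'d \<Rightarrow> nat \<Rightarrow> real^'d" where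
  "gd_iter X y eta w t = ((\<lambda>v. v - eta *\<^sub>R local_grad X y v) ^^ t) w"

definition local_solve :: "real^'d^'n \<Rightarrow> real^'n \<Rightarrow> real \<Rightarrow> real^'d \<Rightarrow> real^'d" where
  "local_solve X y eta w = lim (gd_iter X y eta w)"

primrec local_gd :: "('m::finite \<Rightarrow> real^'d^'n) \<Rightarrow> ('m \<Rightarrow> real^'n) \<Rightarrow> real \<Rightarrow> nat \<Rightarrow> real^'d" where
  "local_gd X y eta 0 = 0"
| "local_gd X y eta (Suc k) =
     (1 / real CARD('m)) *\<^sub>R (\<Sum>i\<in>UNIV. local_solve (X i) (y i) eta (local_gd X y eta k))"

text \<open>Stacked matrix X_c (rows indexed by pairs (node, local row)) and stacked labels.\<close>
definition stack_X :: "('m::finite \<Rightarrow> real^'d^'n) \<Rightarrow> real^'d^('m \<times> 'n)" where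
  "stack_X X = (\<chi> p. X (fst p) $ snd p)"

definition stack_y :: "('m::finite \<Rightarrow> real^'n) \<Rightarrow> real^('m \<times> 'n)" where
  "stack_y y = (\<chi> p. y (fst p) $ snd p)"

definition central_model :: "real^'d^('m::finite \<times> 'n::finite) \<Rightarrow> real^('m \<times> 'n) \<Rightarrow> real^'d" where
  "central_model Xc yc = transpose Xc *v (matrix_inv (Xc ** transpose Xc) *v yc)"

end

theory Submission
  imports Defs
begin

(* Started from w, gradient descent on f_i converges to the orthogonal projection of w onto the
   affine space {v. X_i v = y_i}: its limit solves the normal equations, and every iterate moves
   w only within the row space of X_i. Since w_c lies in all of these affine spaces, Pythagoras
   shows that each local solve lowers |w - w_c|^2 by the squared length of its step, and by
   convexity averaging does not raise it again. Hence |w_0^k - w_c|^2 decreases, the steps tend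
   to 0, and so X_i (w_0^k - w_c) -> 0 for every node, i.e. X_c (w_0^k - w_c) -> 0. All iterates
   and w_c lie in the row space of X_c, on which X_c is injective; so w_0^k -> w_c. *)

lemma inner_transpose_matrix_vector:
  fixes A :: "real^'n^'m"
  shows "x \<bullet> (transpose A *v z) = (A *v x) \<bullet> z"
  by (metis dot_lmul_matrix vector_transpose_matrix)

lemma matrix_vector_mult_eq_0_if_transpose_mult:
  fixes A :: "real^'n^'m"
  assumes "transpose A *v (A *v x) = 0"
  shows "A *v x = 0"
proof -
  have "(A *v x) \<bullet> (A *v x) = x \<bullet> (transpose A *v (A *v x))"
    by (rule inner_transpose_matrix_vector[symmetric])
  then show ?thesis using assms by simp
qed

definition row_space :: "real^'n^'m \<Rightarrow> (real^'n) set" where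
  "row_space A = range ((*v) (transpose A))"

lemma transpose_mult_in_row_space: "transpose A *v z \<in> row_space A"
  by (simp add: row_space_def del: transpose_matrix_vector)

lemma subspace_row_space: "subspace (row_space A)"
  by (simp add: row_space_def subspace_UNIV linear_subspace_image del: transpose_matrix_vector)

lemma closed_row_space: "closed (row_space A)"
  by (simp add: closed_subspace subspace_row_space)

lemma orthogonal_kernel_row_space:
  fixes A :: "real^'n^'m"
  assumes "A *v u = 0" and "v \<in> row_space A"
  shows "orthogonal u v"
  using assms
  by (auto simp: row_space_def orthogonal_def inner_transpose_matrix_vector
      simp del: transpose_matrix_vector)

lemma invertible_mult_transpose:
  fixes A :: "real^'n^'m"
  assumes "rank A = CARD('m)"
  shows "invertible (A ** transpose A)"
proof -
  have inj: "inj ((*v) (transpose A))"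
    using assms by (simp add: full_rank_injective[symmetric] rank_transpose)
  have "z = 0" if "(A ** transpose A) *v z = 0" for z
  proof -
    have "transpose (transpose A) *v (transpose A *v z) = 0"
      using that by (simp add: matrix_vector_mul_assoc del: transpose_matrix_vector)
    then have "transpose A *v z = 0"
      by (rule matrix_vector_mult_eq_0_if_transpose_mult)
    with inj show "z = 0" by (metis inj_eq matrix_vector_mult_0_right)
  qed
  then show ?thesis
    by (simp add: invertible_left_inverse matrix_left_invertible_ker)
qed

lemma matrix_inv_inverse:
  assumes "invertible (A::'a::semiring_1^'n^'m)"
  shows "A ** matrix_inv A = mat 1" and "matrix_inv A ** A = mat 1"
  using someI_ex[OF assms[unfolded invertible_def]] unfolding matrix_inv_def by auto

lemma row_space_projection_id:
  fixes A :: "real^'n^'m"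
  assumes "rank A = CARD('m)" and "v \<in> row_space A"
  shows "v = transpose A *v (matrix_inv (A ** transpose A) *v (A *v v))"
proof -
  obtain u where v: "v = transpose A *v u" using assms(2) unfolding row_space_def by blast
  have "matrix_inv (A ** transpose A) *v (A *v v)
      = (matrix_inv (A ** transpose A) ** (A ** transpose A)) *v u"
    unfolding v by (simp add: matrix_vector_mul_assoc del: transpose_matrix_vector)
  also have "\<dots> = u"
    using matrix_inv_inverse(2)[OF invertible_mult_transpose[OF assms(1)]] by simp
  finally show ?thesis using v by simp
qed

lemma tendsto_0_in_row_space:
  fixes A :: "real^'n^'m" and f :: "nat \<Rightarrow> real^'n"
  assumes "rank A = CARD('m)"
    and "\<And>k. f k \<in> row_space A"
    and "(\<lambda>k. A *v f k) \<longlonglongrightarrow> 0"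
  shows "f \<longlonglongrightarrow> 0"
proof -
  let ?P = "\<lambda>z. transpose A *v (matrix_inv (A ** transpose A) *v z)"
  have "(\<lambda>k. ?P (A *v f k)) \<longlonglongrightarrow> ?P 0"
    by (intro assms(3) bounded_linear.tendsto[OF matrix_vector_mul_bounded_linear])
  moreover have "(\<lambda>k. ?P (A *v f k)) = f"
    using row_space_projection_id[OF assms(1,2)] by (simp add: fun_eq_iff)
  ultimately show ?thesis by simp
qed

lemma norm_mean_power2_le:
  fixes a :: "'i \<Rightarrow> 'v::real_normed_vector"
  shows "(norm ((1 / real (card A)) *\<^sub>R (\<Sum>i\<in>A. a i)))\<^sup>2
    \<le> (1 / real (card A)) * (\<Sum>i\<in>A. (norm (a i))\<^sup>2)"
proof (cases "card A = 0")
  case False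
  have "(norm (\<Sum>i\<in>A. a i))\<^sup>2 \<le> (\<Sum>i\<in>A. norm (a i) * 1)\<^sup>2"
    by (simp add: norm_sum power_mono)
  also have "\<dots> \<le> (\<Sum>i\<in>A. (norm (a i))\<^sup>2) * real (card A)"
    using Cauchy_Schwarz_ineq_sum[of "\<lambda>i. norm (a i)" "\<lambda>_. 1" A] by simp
  finally show ?thesis
    using False by (simp add: power_divide divide_simps power2_eq_square mult_ac)
qed simp

lemma norm_diff_power2_le_mean_decrease:
  fixes a :: "'m::finite \<Rightarrow> 'v::real_normed_vector" and e :: 'v
  assumes pyth: "\<And>j. (norm e)\<^sup>2 = (norm (a j))\<^sup>2 + (norm (e - a j))\<^sup>2"
  shows "(norm (e - a i))\<^sup>2
    \<le> real CARD('m) * ((norm e)\<^sup>2 - (norm ((1 / real CARD('m)) *\<^sub>R (\<Sum>j\<in>UNIV. a j)))\<^sup>2)"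
proof -
  define M where "M = real CARD('m)"
  have M: "M > 0" unfolding M_def by simp
  have a: "(norm (a j))\<^sup>2 = (norm e)\<^sup>2 - (norm (e - a j))\<^sup>2" for j
    using pyth[of j] by linarith
  have "(norm ((1 / M) *\<^sub>R (\<Sum>j\<in>UNIV. a j)))\<^sup>2 \<le> (1 / M) * (\<Sum>j\<in>UNIV. (norm (a j))\<^sup>2)"
    unfolding M_def by (rule norm_mean_power2_le)
  also have "\<dots> = (1 / M) * (\<Sum>j\<in>UNIV. (norm e)\<^sup>2 - (norm (e - a j))\<^sup>2)"
    by (simp only: a)
  also have "\<dots> = (norm e)\<^sup>2 - (1 / M) * (\<Sum>j\<in>UNIV. (norm (e - a j))\<^sup>2)"
    using M by (simp add: sum_subtractf M_def right_diff_distrib)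
  also have "\<dots> \<le> (norm e)\<^sup>2 - (1 / M) * (norm (e - a i))\<^sup>2"
  proof -
    have "(norm (e - a i))\<^sup>2 \<le> (\<Sum>j\<in>UNIV. (norm (e - a j))\<^sup>2)"
      by (rule member_le_sum) simp_all
    with M show ?thesis by (simp add: divide_right_mono)
  qed
  finally show ?thesis using M unfolding M_def by (simp add: field_simps)
qed

lemma tendsto_0_if_le_decrements:
  fixes d s :: "nat \<Rightarrow> real"
  assumes d: "\<And>k. 0 \<le> d k" "\<And>k. d k \<le> s k - s (Suc k)" and "bdd_below (range s)"
  shows "d \<longlonglongrightarrow> 0"
proof -
  obtain B where "\<And>k. B \<le> s k" using assms(3) by (auto simp: bdd_below_def)
  moreover have "decseq s"
  proof (rule decseq_SucI)
    show "s (Suc k) \<le> s k" for k using d[of k] by linarith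
  qed
  ultimately obtain l where "s \<longlonglongrightarrow> l" using decseq_convergent by blast
  then have "(\<lambda>k. s k - s (Suc k)) \<longlonglongrightarrow> l - l" by (intro tendsto_intros LIMSEQ_Suc)
  then have lim: "(\<lambda>k. s k - s (Suc k)) \<longlonglongrightarrow> 0" by simp
  have "\<forall>k. norm (d k) \<le> s k - s (Suc k)" using d by simp
  from Lim_null_comparison[OF always_eventually[OF this] lim] show ?thesis .
qed

lemma averaged_projection_steps_tendsto_0:
  fixes e :: "nat \<Rightarrow> 'v::real_normed_vector" and p :: "'m::finite \<Rightarrow> nat \<Rightarrow> 'v"
  assumes mean: "\<And>k. e (Suc k) = (1 / real CARD('m)) *\<^sub>R (\<Sum>j\<in>UNIV. p j k)"
    and pyth: "\<And>j k. (norm (e k))\<^sup>2 = (norm (p j k))\<^sup>2 + (norm (e k - p j k))\<^sup>2"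
  shows "(\<lambda>k. e k - p i k) \<longlonglongrightarrow> 0"
proof -
  have "(\<lambda>k. (norm (e k - p i k))\<^sup>2) \<longlonglongrightarrow> 0"
  proof (rule tendsto_0_if_le_decrements)
    show "(norm (e k - p i k))\<^sup>2
        \<le> real CARD('m) * (norm (e k))\<^sup>2 - real CARD('m) * (norm (e (Suc k)))\<^sup>2" for k
      using norm_diff_power2_le_mean_decrease[where e = "e k" and a = "\<lambda>j. p j k" and i = i] pyth
      by (simp add: mean right_diff_distrib)
    show "bdd_below (range (\<lambda>k. real CARD('m) * (norm (e k))\<^sup>2))"
      by (intro bdd_belowI[of _ 0]) auto
  qed simp
  then have "(\<lambda>k. sqrt ((norm (e k - p i k))\<^sup>2)) \<longlonglongrightarrow> sqrt 0" by (rule tendsto_real_sqrt)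
  then show ?thesis by (simp add: tendsto_norm_zero_iff)
qed

lemma gd_iter_Suc:
  "gd_iter X y eta w (Suc t) = gd_iter X y eta w t - eta *\<^sub>R local_grad X y (gd_iter X y eta w t)"
  by (simp add: gd_iter_def)

lemma local_solve_stationary:
  assumes "convergent (gd_iter X y eta w)"
  shows "eta *\<^sub>R local_grad X y (local_solve X y eta w) = 0"
proof -
  let ?step = "\<lambda>v. v - eta *\<^sub>R local_grad X y v"
  let ?L = "local_solve X y eta w"
  have lim: "gd_iter X y eta w \<longlonglongrightarrow> ?L"
    using assms unfolding local_solve_def by (simp add: convergent_LIMSEQ_iff)
  have "(\<lambda>t. ?step (gd_iter X y eta w t)) \<longlonglongrightarrow> ?L"
    using LIMSEQ_Suc[OF lim] by (simp only: gd_iter_Suc)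
  moreover have "(\<lambda>t. ?step (gd_iter X y eta w t)) \<longlonglongrightarrow> ?step ?L"
    unfolding local_grad_def
    by (intro tendsto_intros lim bounded_linear.tendsto[OF matrix_vector_mul_bounded_linear])
  ultimately have "?L = ?step ?L" by (rule LIMSEQ_unique)
  then show ?thesis by (simp add: algebra_simps)
qed

lemma local_solve_solves:
  assumes "eta > 0" and "convergent (gd_iter X y eta w)" and "X *v c = y"
  shows "X *v local_solve X y eta w = y"
proof -
  let ?u = "local_solve X y eta w - c"
  have "transpose X *v (X *v local_solve X y eta w - y) = 0"
    using local_solve_stationary[OF assms(2)] assms(1) by (simp add: local_grad_def)
  then have "transpose X *v (X *v ?u) = 0"
    using assms(3) by (simp add: matrix_vector_mult_diff_distrib del: transpose_matrix_vector)
  then have "X *v ?u = 0" by (rule matrix_vector_mult_eq_0_if_transpose_mult)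
  with assms(3) show ?thesis by (simp add: matrix_vector_mult_diff_distrib)
qed

lemma gd_iter_diff_in_row_space:
  fixes X :: "real^'d^'n"
  shows "gd_iter X y eta w t - w \<in> row_space X"
proof (induction t)
  case 0
  show ?case by (simp add: gd_iter_def subspace_0 subspace_row_space)
next
  case (Suc t)
  let ?S = "row_space X"
  note S = subspace_row_space[of X]
  have "gd_iter X y eta w (Suc t) - w = (gd_iter X y eta w t - w)
      - (eta / real CARD('n)) *\<^sub>R (transpose X *v (X *v gd_iter X y eta w t - y))"
    by (simp add: gd_iter_Suc local_grad_def del: transpose_matrix_vector)
  also have "\<dots> \<in> ?S"
    by (intro subspace_diff[OF S] subspace_mul[OF S] Suc.IH transpose_mult_in_row_space)
  finally show ?case .
qed

lemma local_solve_diff_in_row_space: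
  assumes "convergent (gd_iter X y eta w)"
  shows "local_solve X y eta w - w \<in> row_space X"
proof (rule closed_sequentially)
  show "closed (row_space X)" by (rule closed_row_space)
  show "(\<lambda>t. gd_iter X y eta w t - w) \<longlonglongrightarrow> local_solve X y eta w - w"
    using assms unfolding local_solve_def by (intro tendsto_intros) (simp add: convergent_LIMSEQ_iff)
qed (rule gd_iter_diff_in_row_space)

lemma local_solve_pythagoras:
  assumes "eta > 0" and "convergent (gd_iter X y eta w)" and "X *v c = y"
  shows "(norm (w - c))\<^sup>2
    = (norm (local_solve X y eta w - c))\<^sup>2 + (norm (w - local_solve X y eta w))\<^sup>2"
proof -
  let ?L = "local_solve X y eta w"
  have "X *v (?L - c) = 0"
    using local_solve_solves[OF assms] assms(3) by (simp add: matrix_vector_mult_diff_distrib)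
  moreover have "w - ?L \<in> row_space X"
    using subspace_neg[OF subspace_row_space local_solve_diff_in_row_space[OF assms(2)]] by simp
  ultimately have "orthogonal (?L - c) (w - ?L)" by (rule orthogonal_kernel_row_space)
  then show ?thesis using norm_add_Pythagorean by fastforce
qed

lemma mult_central_model:
  fixes Xc :: "real^'d^('m::finite \<times> 'n::finite)"
  assumes "rank Xc = CARD('m \<times> 'n)"
  shows "Xc *v central_model Xc yc = yc"
proof -
  have "Xc *v central_model Xc yc = (Xc ** transpose Xc ** matrix_inv (Xc ** transpose Xc)) *v yc"
    by (simp add: central_model_def matrix_vector_mul_assoc matrix_mul_assoc
        del: transpose_matrix_vector)
  then show ?thesis using matrix_inv_inverse(1)[OF invertible_mult_transpose[OF assms]] by simp
qed

lemma central_model_in_row_space: "central_model Xc yc \<in> row_space Xc"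
  unfolding central_model_def by (rule transpose_mult_in_row_space)

lemma stack_X_mult_nth: "(stack_X X *v v) $ (i, r) = (X i *v v) $ r"
  by (simp add: stack_X_def matrix_vector_mult_def)

lemma stack_X_mult_eq_stack_y_iff: "stack_X X *v w = stack_y y \<longleftrightarrow> (\<forall>i. X i *v w = y i)"
  by (auto simp: vec_eq_iff stack_X_mult_nth stack_y_def)

lemma tendsto_stack_X_mult_0:
  fixes X :: "'m::finite \<Rightarrow> real^'d^'n"
  assumes "\<And>i. (\<lambda>k. X i *v f k) \<longlonglongrightarrow> 0"
  shows "(\<lambda>k. stack_X X *v f k) \<longlonglongrightarrow> 0"
proof (rule vec_tendstoI)
  fix p :: "'m \<times> 'n"
  have "(\<lambda>k. (X (fst p) *v f k) $ snd p) \<longlonglongrightarrow> 0 $ snd p"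
    by (intro tendsto_vec_nth assms)
  then show "(\<lambda>k. (stack_X X *v f k) $ p) \<longlonglongrightarrow> 0 $ p"
    using stack_X_mult_nth[of X _ "fst p" "snd p"] by simp
qed

lemma transpose_mult_eq_transpose_stack_X_mult:
  fixes X :: "'m::finite \<Rightarrow> real^'d^'n"
  shows "transpose (X i) *v z = transpose (stack_X X) *v (\<chi> p. if fst p = i then z $ snd p else 0)"
proof (subst vec_eq_iff, intro allI)
  fix j
  have "(transpose (stack_X X) *v (\<chi> p. if fst p = i then z $ snd p else 0)) $ j
      = (\<Sum>i'\<in>UNIV. \<Sum>r\<in>UNIV. X i' $ r $ j * (if i' = i then z $ r else 0))"
    by (simp add: matrix_vector_mult_def transpose_def stack_X_def
        sum.cartesian_product split_def flip: UNIV_Times_UNIV del: transpose_matrix_vector)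
  also have "\<dots> = (\<Sum>i'\<in>UNIV. if i' = i then (\<Sum>r\<in>UNIV. X i $ r $ j * z $ r) else 0)"
    by (rule sum.cong) auto
  also have "\<dots> = (transpose (X i) *v z) $ j"
    by (simp add: matrix_vector_mult_def transpose_def del: transpose_matrix_vector)
  finally show "(transpose (X i) *v z) $ j
      = (transpose (stack_X X) *v (\<chi> p. if fst p = i then z $ snd p else 0)) $ j" ..
qed

lemma row_space_subset_stack_X: "row_space (X i) \<subseteq> row_space (stack_X X)"
  by (auto simp: row_space_def transpose_mult_eq_transpose_stack_X_mult
      simp del: transpose_matrix_vector)

lemma local_gd_in_row_space:
  assumes "\<And>i w. convergent (gd_iter (X i) (y i) eta w)"
  shows "local_gd X y eta k \<in> row_space (stack_X X)"
proof (induction k)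
  case 0
  show ?case by (simp add: subspace_0 subspace_row_space)
next
  case (Suc k)
  let ?g = "local_gd X y eta k"
  note S = subspace_row_space[of "stack_X X"]
  have "local_solve (X i) (y i) eta ?g \<in> row_space (stack_X X)" for i
  proof -
    have "local_solve (X i) (y i) eta ?g - ?g \<in> row_space (stack_X X)"
      using local_solve_diff_in_row_space[OF assms] row_space_subset_stack_X by blast
    from subspace_add[OF S this Suc.IH] show ?thesis by simp
  qed
  then show ?case
    by (auto intro!: subspace_mul[OF S] subspace_sum[OF S])
qed

theorem theorem1:
  fixes X :: "'m::finite \<Rightarrow> real^'d^'n"
    and y :: "'m \<Rightarrow> real^'n"
    and eta :: real
  assumes dim: "CARD('d) > CARD('m) * CARD('n)"
    and full_rank: "rank (stack_X X) = CARD('m) * CARD('n)"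
    and eta_pos: "eta > 0"
    and eta_conv: "\<And>i w. convergent (gd_iter (X i) (y i) eta w)"
  shows "local_gd X y eta \<longlonglongrightarrow> central_model (stack_X X) (stack_y y)"
proof -
  define wc where "wc = central_model (stack_X X) (stack_y y)"
  define e where "e k = local_gd X y eta k - wc" for k
  define p where "p i k = local_solve (X i) (y i) eta (local_gd X y eta k) - wc" for i k
  have rank: "rank (stack_X X) = CARD('m \<times> 'n)" using full_rank by simp
  have wc_solves: "X i *v wc = y i" for i
    using mult_central_model[OF rank] stack_X_mult_eq_stack_y_iff unfolding wc_def by blast
  have p_kernel: "X i *v p i k = 0" for i k
    using local_solve_solves[OF eta_pos eta_conv wc_solves] wc_solves
    by (simp add: p_def matrix_vector_mult_diff_distrib)
  have "(\<lambda>k. e k - p i k) \<longlonglongrightarrow> 0" for i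
  proof (rule averaged_projection_steps_tendsto_0)
    show "e (Suc k) = (1 / real CARD('m)) *\<^sub>R (\<Sum>j\<in>UNIV. p j k)" for k
      by (simp add: e_def p_def sum_subtractf scaleR_diff_right sum_constant_scaleR
          del: sum_constant)
    show "(norm (e k))\<^sup>2 = (norm (p j k))\<^sup>2 + (norm (e k - p j k))\<^sup>2" for j k
      using local_solve_pythagoras[OF eta_pos eta_conv wc_solves] by (simp add: e_def p_def)
  qed
  then have "(\<lambda>k. X i *v (e k - p i k)) \<longlonglongrightarrow> X i *v 0" for i
    by (intro bounded_linear.tendsto[OF matrix_vector_mul_bounded_linear])
  then have "(\<lambda>k. X i *v e k) \<longlonglongrightarrow> 0" for i
    by (simp add: matrix_vector_mult_diff_distrib p_kernel)
  then have "(\<lambda>k. stack_X X *v e k) \<longlonglongrightarrow> 0"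
    by (rule tendsto_stack_X_mult_0)
  moreover have "e k \<in> row_space (stack_X X)" for k
    unfolding e_def wc_def
    by (intro subspace_diff subspace_row_space local_gd_in_row_space eta_conv central_model_in_row_space)
  ultimately have "e \<longlonglongrightarrow> 0"
    using tendsto_0_in_row_space[OF rank] by blast
  then have "(\<lambda>k. e k + wc) \<longlonglongrightarrow> 0 + wc" by (intro tendsto_intros)
  then show ?thesis by (simp add: e_def wc_def)
qed

end
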